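(* Let $\varphi\colon\mathbb{R}_+\to\mathbb{R}_+$ be a continuous, sublinear and increasing function. Let $\ell\ge1$ be an integer, $(X,\mu)$ a probability space, and $f_1,\dots,f_\ell\colon X\to\mathbb{N}$ measurable maps with $\int_X\varphi(f_i(x))\,d\mu(x)<+\infty$ for every $i\in\{1,\dots,\ell\}$. Then there exists a subadditive map $\psi\colon\mathbb{R}_+\to\mathbb{R}_+$ with $\psi(0)=0$ such that $\psi$ and $t\mapsto t/\psi(t)$ are non-decreasing, and (1) $\varphi(x_k)=o(\psi(x_k))$ as $k\to\infty$ for some increasing sequence $(x_k)_{k\ge0}$ of non-negative real numbers tending to $+\infty$; (2) $\int_X\psi(f_i(x))\,d\mu(x)<+\infty$ for every $i\in\{1,\dots,\ell\}$.
   Context: A function $\varphi$ is sublinear if $\varphi(t)=o(t)$ as $t\to+\infty$. *)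

theory Defs
  imports "HOL-Probability.Probability" "HOL-Library.Landau_Symbols"
begin

definition sublinear :: "(real \<Rightarrow> real) \<Rightarrow> bool" where
  "sublinear \<phi> \<longleftrightarrow> \<phi> \<in> o[at_top](\<lambda>t. t)"

end

theory Submission
  imports Defs
begin

text \<open>
  Take \<open>\<psi> t = (\<Sum>k. c k * min t (T k))\<close>. Each summand is a concave ramp vanishing at 0,
  so \<open>\<psi>\<close> is subadditive and both \<open>\<psi>\<close> and \<open>t / \<psi> t\<close> are nondecreasing.
  First choose thresholds \<open>N k\<close> such that the tails of \<open>\<phi> \<circ> f i\<close> over \<open>{f i \<ge> N k}\<close> have
  integral below \<open>2^-k / (k + 1)\<close>. By sublinearity there are breakpoints \<open>T k \<rightarrow> \<infinity>\<close> and
  \<open>B k \<ge> N k\<close> such that the ramp \<open>\<phi> (T k) / T k * min t (T k)\<close> lies below \<open>\<phi> t\<close> for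
  \<open>t \<ge> B k\<close> and is at most \<open>2^-k / (k + 1)\<close> for \<open>t < B k\<close>. With \<open>c k \<approx> (k + 1) \<phi> (T k) / T k\<close>
  this gives \<open>\<psi> (T k) \<ge> (k + 1) \<phi> (T k)\<close>, while the \<open>k\<close>-th summand contributes
  \<open>O(2^-k)\<close> to the integral of \<open>\<psi> \<circ> f i\<close>.
\<close>

definition ramp_series :: "(nat \<Rightarrow> real) \<Rightarrow> (nat \<Rightarrow> real) \<Rightarrow> real \<Rightarrow> real" where
  "ramp_series c T t = (\<Sum>k. c k * min t (T k))"

locale ramp_coefficients =
  fixes c T :: "nat \<Rightarrow> real"
  assumes c_nonneg: "\<And>k. 0 \<le> c k" and c_summable: "summable c" and T_nonneg: "\<And>k. 0 \<le> T k"
begin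

lemma summable_ramp_series: "summable (\<lambda>k. c k * min t (T k))"
proof (rule summable_comparison_test)
  have "\<bar>min t (T k)\<bar> \<le> \<bar>t\<bar>" for k
    using T_nonneg[of k] by auto
  then show "\<exists>N. \<forall>k\<ge>N. norm (c k * min t (T k)) \<le> \<bar>t\<bar> * c k"
    using c_nonneg by (metis abs_mult abs_of_nonneg mult.commute mult_left_mono real_norm_def)
  show "summable (\<lambda>k. \<bar>t\<bar> * c k)"
    by (intro summable_mult c_summable)
qed

lemma ramp_series_term_nonneg: "0 \<le> t \<Longrightarrow> 0 \<le> c k * min t (T k)"
  using c_nonneg T_nonneg by simp

lemma ramp_series_ge_term: "0 \<le> t \<Longrightarrow> c k * min t (T k) \<le> ramp_series c T t"
  unfolding ramp_series_def
  using sum_le_suminf[OF summable_ramp_series, of "{k}"] ramp_series_term_nonneg by auto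

lemma ramp_series_nonneg: "0 \<le> t \<Longrightarrow> 0 \<le> ramp_series c T t"
  unfolding ramp_series_def by (intro suminf_nonneg summable_ramp_series ramp_series_term_nonneg)

lemma ramp_series_pos:
  assumes "0 < c k" "0 < T k" "0 < t"
  shows "0 < ramp_series c T t"
proof -
  have "0 < c k * min t (T k)"
    using assms by simp
  then show ?thesis
    using ramp_series_ge_term[of t k] assms(3) by linarith
qed

lemma ramp_series_0: "ramp_series c T 0 = 0"
  using T_nonneg by (simp add: ramp_series_def)

lemma ramp_series_subadditive:
  assumes "0 \<le> s" "0 \<le> t"
  shows "ramp_series c T (s + t) \<le> ramp_series c T s + ramp_series c T t"
proof -
  have "ramp_series c T (s + t) \<le> (\<Sum>k. c k * min s (T k) + c k * min t (T k))"
    unfolding ramp_series_def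
  proof (intro suminf_le summable_ramp_series summable_add)
    fix k
    have "min (s + t) (T k) \<le> min s (T k) + min t (T k)"
      using assms T_nonneg[of k] by auto
    then show "c k * min (s + t) (T k) \<le> c k * min s (T k) + c k * min t (T k)"
      using c_nonneg[of k] by (metis distrib_left mult_left_mono)
  qed
  also have "\<dots> = ramp_series c T s + ramp_series c T t"
    unfolding ramp_series_def by (intro suminf_add[symmetric] summable_ramp_series)
  finally show ?thesis .
qed

lemma ramp_series_mono: "mono_on {0..} (ramp_series c T)"
  unfolding ramp_series_def
  by (intro mono_onI suminf_le summable_ramp_series mult_left_mono c_nonneg) auto

lemma ramp_series_ratio_mono: "mono_on {0<..} (\<lambda>t. t / ramp_series c T t)"
proof (rule mono_onI)
  fix s t :: real
  assume st: "s \<in> {0<..}" "t \<in> {0<..}" "s \<le> t"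
  let ?\<psi> = "ramp_series c T"
  have "s * ?\<psi> t = (\<Sum>k. s * (c k * min t (T k)))"
    unfolding ramp_series_def by (rule suminf_mult[OF summable_ramp_series, symmetric])
  also have "\<dots> \<le> (\<Sum>k. t * (c k * min s (T k)))"
  proof (intro suminf_le summable_mult summable_ramp_series)
    fix k
    have "s * min t (T k) \<le> t * min s (T k)"
      using st T_nonneg[of k] by (auto simp: min_def mult_left_mono mult_right_mono mult.commute)
    then show "s * (c k * min t (T k)) \<le> t * (c k * min s (T k))"
      using c_nonneg[of k] by (metis mult.left_commute mult_left_mono)
  qed
  also have "\<dots> = t * ?\<psi> s"
    unfolding ramp_series_def by (rule suminf_mult[OF summable_ramp_series])
  finally have cross: "s * ?\<psi> t \<le> t * ?\<psi> s" .
  show "s / ?\<psi> s \<le> t / ?\<psi> t"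
  proof (cases "?\<psi> s = 0")
    case True
    with cross st ramp_series_nonneg[of t] have "?\<psi> t = 0"
      by (simp add: mult_le_0_iff)
    with True show ?thesis by simp
  next
    case False
    then have "0 < ?\<psi> s" using ramp_series_nonneg[of s] st by simp
    moreover have "?\<psi> s \<le> ?\<psi> t" using ramp_series_mono st by (auto intro: mono_onD)
    ultimately show ?thesis using cross st by (simp add: divide_le_eq le_divide_eq field_simps)
  qed
qed

lemma nn_integral_ramp_series_less_top:
  fixes g :: "'a \<Rightarrow> nat" and b :: "nat \<Rightarrow> real"
  assumes g_meas: "g \<in> measurable M (count_space UNIV)"
    and term_le: "\<And>k. (\<integral>\<^sup>+ x. ennreal (c k * min (real (g x)) (T k)) \<partial>M) \<le> ennreal (b k)"
    and "summable b" and b_nonneg: "\<And>k. 0 \<le> b k"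
  shows "(\<integral>\<^sup>+ x. ennreal (ramp_series c T (real (g x))) \<partial>M) < \<infinity>"
proof -
  have "(\<integral>\<^sup>+ x. ennreal (ramp_series c T (real (g x))) \<partial>M)
      = (\<integral>\<^sup>+ x. (\<Sum>k. ennreal (c k * min (real (g x)) (T k))) \<partial>M)"
    unfolding ramp_series_def
    by (intro nn_integral_cong suminf_ennreal2[symmetric] summable_ramp_series ramp_series_term_nonneg) auto
  also have "\<dots> = (\<Sum>k. \<integral>\<^sup>+ x. ennreal (c k * min (real (g x)) (T k)) \<partial>M)"
    by (intro nn_integral_suminf measurable_compose[OF g_meas]) simp
  also have "\<dots> \<le> (\<Sum>k. ennreal (b k))"
    by (intro suminf_le term_le summableI)
  also have "\<dots> < \<infinity>"
    using \<open>summable b\<close> b_nonneg by (simp add: suminf_ennreal2)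
  finally show ?thesis .
qed

end

lemma nn_integral_tail_tendsto_0:
  fixes g :: "'a \<Rightarrow> nat" and h :: "nat \<Rightarrow> ennreal"
  assumes g_meas: "g \<in> measurable M (count_space UNIV)"
    and finite: "(\<integral>\<^sup>+ x. h (g x) \<partial>M) < \<infinity>"
  shows "(\<lambda>N. \<integral>\<^sup>+ x. (if N \<le> g x then h (g x) else 0) \<partial>M) \<longlonglongrightarrow> 0"
proof -
  define u where "u = (\<lambda>N x. if N \<le> g x then h (g x) else 0)"
  have u_meas: "u N \<in> borel_measurable M" for N
    unfolding u_def by (rule measurable_compose[OF g_meas]) simp
  have u_dec: "u (Suc N) x \<le> u N x" for N x
    by (simp add: u_def)
  have "(INF N. u N x) = 0" for x
    by (rule antisym[OF INF_lower2[of "Suc (g x)"]]) (auto simp: u_def)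
  then have "(INF N. integral\<^sup>N M (u N)) = 0"
    using nn_integral_monotone_convergence_INF_AE'[where f = u, OF AE_I2[OF u_dec] u_meas] finite
    by (simp add: u_def)
  moreover have "decseq (\<lambda>N. integral\<^sup>N M (u N))"
    by (intro decseq_SucI nn_integral_mono u_dec)
  ultimately have "(\<lambda>N. integral\<^sup>N M (u N)) \<longlonglongrightarrow> 0"
    using LIMSEQ_INF by metis
  then show ?thesis
    unfolding u_def .
qed

lemma (in prob_space) nn_integral_le_tail_plus_const:
  fixes g :: "'a \<Rightarrow> nat" and h \<phi> :: "nat \<Rightarrow> real"
  assumes g_meas: "g \<in> measurable M (count_space UNIV)"
    and h_le: "\<And>n. h n \<le> w * (if N \<le> n then \<phi> n else 0) + b"
    and tail: "(\<integral>\<^sup>+ x. (if N \<le> g x then ennreal (\<phi> (g x)) else 0) \<partial>M) \<le> ennreal (\<delta> / w)"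
    and \<phi>_nonneg: "\<And>n. 0 \<le> \<phi> n" and w: "0 < w" and "0 \<le> b" "0 \<le> \<delta>"
  shows "(\<integral>\<^sup>+ x. ennreal (h (g x)) \<partial>M) \<le> ennreal (\<delta> + b)"
proof -
  have meas: "(\<lambda>x. k (g x)) \<in> borel_measurable M" for k :: "nat \<Rightarrow> ennreal"
    by (rule measurable_compose[OF g_meas]) simp
  have "ennreal (h n) \<le> ennreal (w * (if N \<le> n then \<phi> n else 0) + b)" for n
    by (rule ennreal_leI[OF h_le])
  also have "\<dots> n = ennreal w * (if N \<le> n then ennreal (\<phi> n) else 0) + ennreal b" for n
    using \<phi>_nonneg w \<open>0 \<le> b\<close> by (simp add: ennreal_plus ennreal_mult)
  finally have "(\<integral>\<^sup>+ x. ennreal (h (g x)) \<partial>M)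
      \<le> (\<integral>\<^sup>+ x. ennreal w * (if N \<le> g x then ennreal (\<phi> (g x)) else 0) + ennreal b \<partial>M)"
    by (intro nn_integral_mono)
  also have "\<dots> = ennreal w * (\<integral>\<^sup>+ x. (if N \<le> g x then ennreal (\<phi> (g x)) else 0) \<partial>M) + ennreal b"
    using meas by (simp add: nn_integral_add nn_integral_cmult emeasure_space_1)
  also have "\<dots> \<le> ennreal w * ennreal (\<delta> / w) + ennreal b"
    using tail by (intro add_mono mult_left_mono) auto
  also have "\<dots> = ennreal (\<delta> + b)"
    using w \<open>0 \<le> b\<close> \<open>0 \<le> \<delta>\<close> by (simp add: ennreal_mult[symmetric] ennreal_plus)
  finally show ?thesis .
qed

lemma nn_integral_tails_uniformly_small:
  fixes g :: "'i \<Rightarrow> 'a \<Rightarrow> nat" and h :: "nat \<Rightarrow> ennreal"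
  assumes "finite I" and "\<And>i. i \<in> I \<Longrightarrow> g i \<in> measurable M (count_space UNIV)"
    and "\<And>i. i \<in> I \<Longrightarrow> (\<integral>\<^sup>+ x. h (g i x) \<partial>M) < \<infinity>" and "0 < e"
  shows "\<exists>N. \<forall>i\<in>I. (\<integral>\<^sup>+ x. (if N \<le> g i x then h (g i x) else 0) \<partial>M) < e"
proof -
  have "\<forall>\<^sub>F N in sequentially. \<forall>i\<in>I. (\<integral>\<^sup>+ x. (if N \<le> g i x then h (g i x) else 0) \<partial>M) < e"
    using assms by (intro eventually_ball_finite ballI order_tendstoD(2)[OF nn_integral_tail_tendsto_0]) auto
  then show ?thesis
    by (auto simp: eventually_sequentially)
qed

lemma sublinear_ramp_below:
  fixes \<phi> :: "real \<Rightarrow> real"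
  assumes cont: "continuous_on {0..} \<phi>" and sublin: "sublinear \<phi>" and mono: "mono_on {0..} \<phi>"
    and B: "0 < B" and e: "0 < e"
  obtains T where "B \<le> T" "\<phi> T / T \<le> e" "\<And>t. B \<le> t \<Longrightarrow> \<phi> T / T * min t T \<le> \<phi> t"
proof -
  have "\<forall>\<^sub>F t in at_top. norm (\<phi> t) \<le> e * norm t \<and> B \<le> t"
    using sublin e unfolding sublinear_def
    by (intro eventually_conj eventually_ge_at_top) (auto dest: landau_o.smallD)
  then obtain R where R: "norm (\<phi> R) \<le> e * norm R" "B \<le> R"
    unfolding eventually_at_top_linorder by blast
  txt \<open>A minimiser of \<phi> s / s on [B, R] works: below it the ramp is dominated by the minimality,
    above it by the monotonicity of \<phi>.\<close>
  have "continuous_on {B..R} (\<lambda>s. \<phi> s / s)"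
    using B by (intro continuous_intros continuous_on_subset[OF cont]) auto
  then obtain T where T: "T \<in> {B..R}" and T_min: "\<And>s. s \<in> {B..R} \<Longrightarrow> \<phi> T / T \<le> \<phi> s / s"
    using continuous_attains_inf[OF compact_Icc, of B R "\<lambda>s. \<phi> s / s"] R(2) by auto
  have "\<phi> R / R \<le> e"
    using R B by (simp add: divide_le_eq abs_le_iff)
  then have "\<phi> T / T \<le> e"
    using T_min[of R] R(2) by simp
  moreover have "\<phi> T / T * min t T \<le> \<phi> t" if t: "B \<le> t" for t
  proof (cases "t \<le> T")
    case True
    then have "\<phi> T / T \<le> \<phi> t / t"
      using T t by (intro T_min) auto
    then show ?thesis
      using True t B by (simp add: le_divide_eq)
  next
    case False
    then show ?thesis
      using T B by (auto intro: mono_onD[OF mono])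
  qed
  ultimately show ?thesis
    using that T by auto
qed

lemma sublinear_ramp_sequence:
  fixes \<phi> :: "real \<Rightarrow> real" and N :: "nat \<Rightarrow> nat" and \<epsilon> :: "nat \<Rightarrow> real"
  assumes cont: "continuous_on {0..} \<phi>" and sublin: "sublinear \<phi>" and mono: "mono_on {0..} \<phi>"
    and \<epsilon>_pos: "\<And>k. 0 < \<epsilon> k"
  obtains B T :: "nat \<Rightarrow> real"
  where "\<And>k. 1 \<le> B k" "\<And>k. real (N k) \<le> B k" "\<And>k. B k \<le> T k" "\<And>k. T k + 1 \<le> T (Suc k)"
    "\<And>k. \<phi> (T k) / T k * B k \<le> \<epsilon> k" "\<And>k t. B k \<le> t \<Longrightarrow> \<phi> (T k) / T k * min t (T k) \<le> \<phi> t"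
proof -
  define good where "good k p \<longleftrightarrow> 1 \<le> fst p \<and> real (N k) \<le> fst p \<and> fst p \<le> snd p \<and>
      \<phi> (snd p) / snd p * fst p \<le> \<epsilon> k \<and> (\<forall>t\<ge>fst p. \<phi> (snd p) / snd p * min t (snd p) \<le> \<phi> t)"
    for k and p :: "real \<times> real"
  have step: "\<exists>p. good k p \<and> T\<^sub>0 + 1 \<le> snd p" for k T\<^sub>0
  proof -
    define B where "B = max (T\<^sub>0 + 1) (max 1 (real (N k)))"
    have "0 < B" "0 < \<epsilon> k / B"
      using \<epsilon>_pos[of k] by (auto simp: B_def)
    then obtain T where T: "B \<le> T" "\<phi> T / T \<le> \<epsilon> k / B" "\<And>t. B \<le> t \<Longrightarrow> \<phi> T / T * min t T \<le> \<phi> t"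
      using sublinear_ramp_below[OF cont sublin mono] by metis
    then have "\<phi> T / T * B \<le> \<epsilon> k"
      using \<open>0 < B\<close> by (simp add: le_divide_eq)
    with T have "good k (B, T)"
      by (auto simp: good_def B_def)
    moreover have "T\<^sub>0 + 1 \<le> T"
      using T(1) by (simp add: B_def)
    ultimately show ?thesis
      by auto
  qed
  obtain p where "\<And>k. good k (p k) \<and> snd (p k) + 1 \<le> snd (p (Suc k))"
    using dependent_nat_choice[of good "\<lambda>_ p q. snd p + 1 \<le> snd q"] step by metis
  then show ?thesis
    by (intro that[of "fst \<circ> p" "snd \<circ> p"]) (auto simp: good_def)
qed

lemma ramp_le_tail_plus:
  fixes \<phi> :: "real \<Rightarrow> real"
  assumes "0 \<le> a" "0 \<le> t" "0 \<le> N" "N \<le> B" "a * B \<le> \<delta>" "0 \<le> \<phi> t"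
    and ramp: "B \<le> t \<Longrightarrow> a * min t T \<le> \<phi> t"
  shows "a * min t T \<le> (if N \<le> t then \<phi> t else 0) + \<delta>"
proof (cases "B \<le> t")
  case True
  moreover have "0 \<le> \<delta>"
    using mult_nonneg_nonneg[of a B] assms(1,3-5) by linarith
  ultimately show ?thesis
    using ramp \<open>N \<le> B\<close> by auto
next
  case False
  then have "a * min t T \<le> a * B"
    using \<open>0 \<le> a\<close> by (intro mult_left_mono) auto
  then show ?thesis
    using assms(2,5,6) by auto
qed

lemma
  fixes x :: "nat \<Rightarrow> real"
  assumes step: "\<And>k. x k + 1 \<le> x (Suc k)"
  shows strict_mono_if_steps_ge_1: "strict_mono x"
    and filterlim_at_top_if_steps_ge_1: "filterlim x at_top sequentially"
proof -
  have "x k < x (Suc k)" for k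
    using step[of k] by linarith
  then show "strict_mono x"
    by (rule strict_monoI_Suc)
  have lower: "x 0 + real k \<le> x k" for k
  proof (induction k)
    case (Suc k)
    then show ?case using step[of k] by simp
  qed simp
  have "filterlim (\<lambda>k. x 0 + real k) at_top sequentially"
    by (rule filterlim_tendsto_add_at_top[OF tendsto_const filterlim_real_sequentially])
  then show "filterlim x at_top sequentially"
    by (rule filterlim_at_top_mono) (use lower in auto)
qed

lemma sublinear_ramp_coefficients:
  fixes \<phi> :: "real \<Rightarrow> real" and N :: "nat \<Rightarrow> nat" and \<epsilon> :: "nat \<Rightarrow> real"
  assumes nonneg: "\<And>t. 0 \<le> t \<Longrightarrow> 0 \<le> \<phi> t" and cont: "continuous_on {0..} \<phi>"
    and sublin: "sublinear \<phi>" and mono: "mono_on {0..} \<phi>"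
    and \<epsilon>_pos: "\<And>k. 0 < \<epsilon> k" and \<epsilon>_summable: "summable \<epsilon>"
  obtains c T :: "nat \<Rightarrow> real"
  where "\<And>k. 0 < c k" "summable c" "\<And>k. 1 \<le> T k" "strict_mono T" "filterlim T at_top sequentially"
    "\<And>k. real (Suc k) * \<phi> (T k) \<le> c k * T k"
    "\<And>k t. 0 \<le> t \<Longrightarrow> c k * min t (T k) \<le> real (Suc k) * (if real (N k) \<le> t then \<phi> t else 0) + 2 * \<epsilon> k"
proof -
  obtain B T :: "nat \<Rightarrow> real" where
    B: "\<And>k. 1 \<le> B k" "\<And>k. real (N k) \<le> B k" "\<And>k. B k \<le> T k"
    and T_step: "\<And>k. T k + 1 \<le> T (Suc k)"
    and slope_B: "\<And>k. \<phi> (T k) / T k * B k \<le> \<epsilon> k / real (Suc k)"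
    and ramp: "\<And>k t. B k \<le> t \<Longrightarrow> \<phi> (T k) / T k * min t (T k) \<le> \<phi> t"
    using sublinear_ramp_sequence[OF cont sublin mono, of "\<lambda>k. \<epsilon> k / real (Suc k)" N] \<epsilon>_pos
    by (metis divide_pos_pos of_nat_0_less_iff zero_less_Suc)
  define a where "a k = \<phi> (T k) / T k" for k
  txt \<open>The second summand only serves to make \<open>c\<close> positive and costs at most \<open>\<epsilon> k\<close>.\<close>
  define c where "c k = real (Suc k) * a k + \<epsilon> k / T k" for k
  have T_ge_1: "1 \<le> T k" for k
    using B[of k] by linarith
  have a_nonneg: "0 \<le> a k" for k
    using nonneg[of "T k"] T_ge_1[of k] by (simp add: a_def)
  have c_pos: "0 < c k" for k
    using a_nonneg[of k] T_ge_1[of k] \<epsilon>_pos[of k] by (simp add: c_def add_nonneg_pos)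
  have slope: "real (Suc k) * a k \<le> \<epsilon> k" for k
  proof -
    have "real (Suc k) * a k \<le> real (Suc k) * (a k * B k)"
      using a_nonneg[of k] B(1)[of k] by (simp add: mult_le_cancel_left1)
    also have "\<dots> \<le> \<epsilon> k"
      using slope_B[of k] by (simp add: a_def field_simps)
    finally show ?thesis .
  qed
  have \<epsilon>_div_T: "\<epsilon> k / T k \<le> \<epsilon> k" for k
    using divide_left_mono[of 1 "T k" "\<epsilon> k"] T_ge_1[of k] \<epsilon>_pos[of k] by simp
  have c_le: "c k \<le> 2 * \<epsilon> k" for k
    using \<epsilon>_div_T[of k] slope[of k] unfolding c_def by linarith
  have "summable c"
  proof (rule summable_comparison_test')
    show "summable (\<lambda>k. 2 * \<epsilon> k)"
      using \<epsilon>_summable by (rule summable_mult)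
    show "norm (c k) \<le> 2 * \<epsilon> k" for k
      using c_pos[of k] c_le[of k] by simp
  qed
  have "real (Suc k) * \<phi> (T k) \<le> c k * T k" for k
    using T_ge_1[of k] \<epsilon>_pos[of k] by (simp add: c_def a_def field_simps)
  moreover have "c k * min t (T k) \<le> real (Suc k) * (if real (N k) \<le> t then \<phi> t else 0) + 2 * \<epsilon> k"
    if t: "0 \<le> t" for k t
  proof -
    have "a k * min t (T k) \<le> (if real (N k) \<le> t then \<phi> t else 0) + \<epsilon> k / real (Suc k)"
      using a_nonneg[of k] t B(2)[of k] slope_B[of k] nonneg[OF t] ramp[of k t]
      by (intro ramp_le_tail_plus[where B = "B k"]) (auto simp: a_def)
    then have "real (Suc k) * (a k * min t (T k))
        \<le> real (Suc k) * ((if real (N k) \<le> t then \<phi> t else 0) + \<epsilon> k / real (Suc k))"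
      by (rule mult_left_mono) simp
    then have "real (Suc k) * a k * min t (T k) \<le> real (Suc k) * (if real (N k) \<le> t then \<phi> t else 0) + \<epsilon> k"
      by (simp add: distrib_left mult.assoc)
    moreover have "\<epsilon> k / T k * min t (T k) \<le> \<epsilon> k"
      using T_ge_1[of k] \<epsilon>_pos[of k] t by (simp add: divide_le_eq mult_left_mono)
    ultimately show ?thesis
      by (simp add: c_def distrib_right)
  qed
  ultimately show ?thesis
    using that c_pos \<open>summable c\<close> T_ge_1 strict_mono_if_steps_ge_1[of T, OF T_step]
      filterlim_at_top_if_steps_ge_1[of T, OF T_step] by blast
qed

lemma smallo_sequentially_if_Suc_mult_le:
  fixes u v :: "nat \<Rightarrow> real"
  assumes le: "\<And>k. real (Suc k) * norm (u k) \<le> norm (v k)"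
  shows "u \<in> o[sequentially](v)"
proof (rule landau_o.smallI)
  fix e :: real
  assume e: "0 < e"
  show "\<forall>\<^sub>F k in sequentially. norm (u k) \<le> e * norm (v k)"
  proof (rule eventually_sequentiallyI)
    fix k assume "nat \<lceil>1 / e\<rceil> \<le> k"
    then have "1 \<le> e * real (Suc k)"
      using e by (simp add: field_simps)
    from mult_right_mono[OF this norm_ge_zero[of "u k"]]
    have "norm (u k) \<le> e * real (Suc k) * norm (u k)"
      by simp
    also have "\<dots> \<le> e * norm (v k)"
      using le[of k] e by (simp add: mult.assoc)
    finally show "norm (u k) \<le> e * norm (v k)" .
  qed
qed

theorem lemma3p2:
  fixes \<phi> :: "real \<Rightarrow> real"
    and M :: "'a measure"
    and l :: nat
    and f :: "nat \<Rightarrow> 'a \<Rightarrow> nat"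
  assumes phi_nonneg: "\<And>t. t \<ge> 0 \<Longrightarrow> \<phi> t \<ge> 0"
    and phi_cont: "continuous_on {0..} \<phi>"
    and phi_sublin: "sublinear \<phi>"
    and phi_mono: "mono_on {0..} \<phi>"
    and l_ge: "l \<ge> 1"
    and prob: "prob_space M"
    and f_meas: "\<And>i. i \<in> {1..l} \<Longrightarrow> f i \<in> measurable M (count_space UNIV)"
    and f_int: "\<And>i. i \<in> {1..l} \<Longrightarrow> (\<integral>\<^sup>+ x. ennreal (\<phi> (real (f i x))) \<partial>M) < \<infinity>"
  shows "\<exists>\<psi> :: real \<Rightarrow> real.
           (\<forall>t\<ge>0. \<psi> t \<ge> 0) \<and> (\<forall>t>0. \<psi> t > 0) \<and> \<psi> 0 = 0 \<and>
           (\<forall>s\<ge>0. \<forall>t\<ge>0. \<psi> (s + t) \<le> \<psi> s + \<psi> t) \<and>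
           mono_on {0..} \<psi> \<and>
           mono_on {0<..} (\<lambda>t. t / \<psi> t) \<and>
           (\<exists>x :: nat \<Rightarrow> real. strict_mono x \<and> (\<forall>k. x k \<ge> 0) \<and>
              filterlim x at_top sequentially \<and>
              (\<lambda>k. \<phi> (x k)) \<in> o[sequentially](\<lambda>k. \<psi> (x k))) \<and>
           (\<forall>i\<in>{1..l}. (\<integral>\<^sup>+ x. ennreal (\<psi> (real (f i x))) \<partial>M) < \<infinity>)"
proof -
  let ?tail = "\<lambda>i N. \<integral>\<^sup>+ x. (if N \<le> f i x then ennreal (\<phi> (real (f i x))) else 0) \<partial>M"
  have "\<exists>N. \<forall>i\<in>{1..l}. ?tail i N < ennreal ((1/2)^k / real (Suc k))" for k
    using f_meas f_int by (intro nn_integral_tails_uniformly_small) auto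
  then obtain N where N: "\<And>k i. i \<in> {1..l} \<Longrightarrow> ?tail i (N k) < ennreal ((1/2)^k / real (Suc k))"
    by metis
  obtain c T :: "nat \<Rightarrow> real" where c_pos: "\<And>k. 0 < c k" and "summable c" and T_ge_1: "\<And>k. 1 \<le> T k"
    and T_seq: "strict_mono T" "filterlim T at_top sequentially"
    and c_big: "\<And>k. real (Suc k) * \<phi> (T k) \<le> c k * T k"
    and c_bound: "\<And>k t. 0 \<le> t \<Longrightarrow> c k * min t (T k) \<le> real (Suc k) * (if real (N k) \<le> t then \<phi> t else 0) + 2 * (1/2)^k"
    using sublinear_ramp_coefficients[OF phi_nonneg phi_cont phi_sublin phi_mono, of "\<lambda>k. (1/2)^k" N]
      summable_geometric[of "1/2 :: real"] by auto
  interpret \<psi>: ramp_coefficients c T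
    using c_pos \<open>summable c\<close> T_ge_1 by unfold_locales (auto intro: less_imp_le order_trans[OF zero_le_one])
  have "(\<integral>\<^sup>+ x. ennreal (ramp_series c T (real (f i x))) \<partial>M) < \<infinity>" if i: "i \<in> {1..l}" for i
  proof (rule \<psi>.nn_integral_ramp_series_less_top[OF f_meas[OF i], where b = "\<lambda>k. (1/2)^k + 2 * (1/2)^k"])
    show "(\<integral>\<^sup>+ x. ennreal (c k * min (real (f i x)) (T k)) \<partial>M) \<le> ennreal ((1/2)^k + 2 * (1/2)^k)" for k
      using c_bound[OF of_nat_0_le_iff] phi_nonneg less_imp_le[OF N[OF i, of k]]
      by (intro prob_space.nn_integral_le_tail_plus_const[OF prob f_meas[OF i],
            where h = "\<lambda>n. c k * min (real n) (T k)" and \<phi> = "\<lambda>n. \<phi> (real n)"]) auto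
  qed (auto intro: summable_add summable_mult summable_geometric)
  moreover have "(\<lambda>k. \<phi> (T k)) \<in> o[sequentially](\<lambda>k. ramp_series c T (T k))"
  proof (rule smallo_sequentially_if_Suc_mult_le)
    fix k
    have "real (Suc k) * \<phi> (T k) \<le> c k * min (T k) (T k)"
      using c_big[of k] by simp
    also have "\<dots> \<le> ramp_series c T (T k)"
      using \<psi>.T_nonneg by (rule \<psi>.ramp_series_ge_term)
    finally show "real (Suc k) * norm (\<phi> (T k)) \<le> norm (ramp_series c T (T k))"
      using phi_nonneg \<psi>.ramp_series_nonneg \<psi>.T_nonneg[of k] by simp
  qed
  moreover have "0 < ramp_series c T t" if "0 < t" for t
    using \<psi>.ramp_series_pos[OF c_pos[of 0] _ that] T_ge_1[of 0] by simp
  ultimately show ?thesis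
    using \<psi>.ramp_series_nonneg \<psi>.ramp_series_0 \<psi>.ramp_series_subadditive \<psi>.ramp_series_mono
      \<psi>.ramp_series_ratio_mono T_seq \<psi>.T_nonneg
    by (intro exI[of _ "ramp_series c T"] exI[of _ T] conjI allI impI ballI) simp_all
qed

end
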